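(* Let $\rho,\sigma,\omega\in\mathcal{S}(\mathbb{C}^2)$ be qubit states each of which is orthogonal to $\sigma_z$ in the Hilbert–Schmidt sense (i.e. $\mathrm{tr}[\rho\sigma_z]=\mathrm{tr}[\sigma\sigma_z]=\mathrm{tr}[\omega\sigma_z]=0$). Then $$d^2_{z,2}(\rho,\sigma)+d^2_{z,2}(\sigma,\omega)\ge d^2_{z,2}(\rho,\omega).$$
   Context: Qubit setting: $\mathcal{H}=\mathbb{C}^2$, $\mathcal{H}^*$ is identified with $\mathbb{C}^2$ via the dual basis, and $A^T$ is the usual matrix transpose; operators on $\mathcal{H}\otimes\mathcal{H}^*$ are $4\times4$ matrices in the basis $e_1\otimes e_1^*,e_1\otimes e_2^*,e_2\otimes e_1^*,e_2\otimes e_2^*$. $\sigma_z=\begin{pmatrix}1&0\\0&-1\end{pmatrix}$. The set of couplings of states $\rho,\omega$ is $\mathcal{C}(\rho,\omega)=\{\Pi\in\mathcal{S}(\mathcal{H}\otimes\mathcal{H}^* ):\mathrm{tr}_{\mathcal{H}^*}[\Pi]=\omega,\ \mathrm{tr}_{\mathcal{H}}[\Pi]=\rho^T\}$. $C_{z,2}=(\sigma_z\otimes I^T-I\otimes\sigma_z^T)^2=\mathrm{diag}(0,4,4,0)$, $D^2_{z,2}(\rho,\omega)=\min_{\Pi\in\mathcal{C}(\rho,\omega)}\mathrm{tr}[\Pi C_{z,2}]$, and $d_{z,2}(\rho,\omega)=\big(D^2_{z,2}(\rho,\omega)-\tfrac12(D^2_{z,2}(\rho,\rho)+D^2_{z,2}(\omega,\omega))\big)^{1/2}$.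 The claim is the triangle inequality for the squared quantity $d^2_{z,2}$. *)

theory Defs
  imports "HOL-Analysis.Analysis"
begin

(* Operators on a finite-dimensional Hilbert space with index type 'n are
   matrices complex^'n^'n (row index first).  The qubit space C^2 uses index
   type 2; operators on H (x) H^* use the index type 2 \<times> 2, where the pair
   (i,j) stands for the basis vector e_i (x) e_j^*. *)

definition mtrace :: "complex^'n^'n \<Rightarrow> complex" where
  "mtrace A = (\<Sum>i\<in>UNIV. A $ i $ i)"

definition adjointm :: "complex^'n^'n \<Rightarrow> complex^'n^'n" where
  "adjointm A = (\<chi> i j. cnj (A $ j $ i))"

definition qform :: "complex^'n^'n \<Rightarrow> complex^'n \<Rightarrow> complex" where
  "qform A v = (\<Sum>i\<in>UNIV. \<Sum>j\<in>UNIV. cnj (v $ i) * A $ i $ j * v $ j)"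

definition psd :: "complex^'n^'n \<Rightarrow> bool" where
  "psd A \<longleftrightarrow> A = adjointm A \<and> (\<forall>v. qform A v \<in> \<real> \<and> 0 \<le> Re (qform A v))"

definition is_state :: "complex^'n^'n \<Rightarrow> bool" where
  "is_state A \<longleftrightarrow> psd A \<and> mtrace A = 1"

definition kron :: "complex^'a^'a \<Rightarrow> complex^'b^'b \<Rightarrow> complex^('a::finite\<times>'b::finite)^('a\<times>'b)" where
  "kron A B = (\<chi> p q. A $ fst p $ fst q * B $ snd p $ snd q)"

definition ptrace_dual :: "complex^('a::finite\<times>'b::finite)^('a\<times>'b) \<Rightarrow> complex^'a^'a" where
  "ptrace_dual P = (\<chi> i k. \<Sum>j\<in>UNIV. P $ (i, j) $ (k, j))"

definition ptrace_H :: "complex^('a::finite\<times>'b::finite)^('a\<times>'b) \<Rightarrow> complex^'b^'b" where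
  "ptrace_H P = (\<chi> j l. \<Sum>i\<in>UNIV. P $ (i, j) $ (i, l))"

definition sigma_z :: "complex^2^2" where
  "sigma_z = (\<chi> i j. if i = j then (if i = 1 then 1 else -1) else 0)"

definition couplings :: "complex^2^2 \<Rightarrow> complex^2^2 \<Rightarrow> (complex^(2\<times>2)^(2\<times>2)) set" where
  "couplings \<rho> \<omega> = {P. is_state P \<and> ptrace_dual P = \<omega> \<and> ptrace_H P = transpose \<rho>}"

definition C_z2 :: "complex^(2\<times>2)^(2\<times>2)" where
  "C_z2 = (let X = kron sigma_z (transpose (mat 1)) - kron (mat 1) (transpose sigma_z) in X ** X)"

(* D^2_{z,2}(rho,omega) = min over couplings of tr[Pi C]; the minimum exists
   (nonempty compact set, continuous cost), so it equals the infimum *)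
definition D2_z2 :: "complex^2^2 \<Rightarrow> complex^2^2 \<Rightarrow> real" where
  "D2_z2 \<rho> \<omega> = Inf ((\<lambda>P. Re (mtrace (P ** C_z2))) ` couplings \<rho> \<omega>)"

definition d2_z2 :: "complex^2^2 \<Rightarrow> complex^2^2 \<Rightarrow> real" where
  "d2_z2 \<rho> \<omega> = D2_z2 \<rho> \<omega> - (D2_z2 \<rho> \<rho> + D2_z2 \<omega> \<omega>) / 2"

end

theory Submission
  imports Defs
begin

text \<open>
  A state orthogonal to \<open>\<sigma>\<^sub>z\<close> has the form \<open>[[1/2, a], [a\<^sup>*, 1/2]]\<close> with \<open>|a| \<le> 1/2\<close>.
  For two such states with off-diagonal entries \<open>a, b\<close> the optimal cost is
  \<open>G(max |a| |b|)\<close>, where \<open>G t = 2 - 2 \<surd>(1 - 4t\<^sup>2)\<close>. Indeed the marginal conditions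
  force the diagonal of a coupling to be \<open>(x, y, y, x)\<close> with \<open>x + y = 1/2\<close>, its cost is \<open>8y\<close>,
  and positivity gives \<open>|a|\<^sup>2, |b|\<^sup>2 \<le> 4xy\<close>, which forces \<open>8y \<ge> G(max |a| |b|)\<close>; equality is
  attained by an even mixture of two pure states whose phases average to the prescribed
  off-diagonal entries. Since \<open>G\<close> is increasing, the triangle inequality for \<open>d\<^sup>2\<close> reduces to
  \<open>G s + G (max a w) \<le> G (max a s) + G (max s w)\<close>, which holds for every increasing \<open>G\<close>.
\<close>

lemma nonneg_quadratic_coeff_bound:
  fixes a b r :: real
  assumes nonneg: "\<And>t. 0 \<le> a - 2 * b * t + r * b * t\<^sup>2" and "0 \<le> a" "0 \<le> r" "0 \<le> b"
  shows "b \<le> a * r"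
proof (cases "b = 0 \<or> r = 0")
  case True
  have False if "b > 0" "r = 0"
    using that nonneg[of "(a + 1) / (2 * b)"] by (simp add: field_simps)
  with True show ?thesis
    using assms(2-4) by fastforce
next
  case False
  then show ?thesis
    using assms(3,4) nonneg[of "1 / r"] by (auto simp: field_simps power2_eq_square)
qed

lemma sum_UNIV_two_points:
  fixes f :: "'n::finite \<Rightarrow> 'b::comm_monoid_add"
  assumes "i \<noteq> j" "\<And>k. k \<noteq> i \<Longrightarrow> k \<noteq> j \<Longrightarrow> f k = 0"
  shows "sum f UNIV = f i + f j"
proof -
  have "sum f UNIV = sum f {i, j}"
    by (rule sum.mono_neutral_right) (use assms in auto)
  then show ?thesis using assms by simp
qed

lemma qform_two_point_vector:
  fixes A :: "complex^'n^'n"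
  assumes "i \<noteq> j"
  shows "qform A (\<chi> k. if k = i then s else if k = j then t else 0) =
    cnj s * A $ i $ i * s + cnj s * A $ i $ j * t + cnj t * A $ j $ i * s + cnj t * A $ j $ j * t"
proof -
  let ?v = "(\<chi> k. if k = i then s else if k = j then t else 0) :: complex^'n"
  have "(\<Sum>l\<in>UNIV. cnj (?v $ k) * A $ k $ l * ?v $ l)
      = cnj (?v $ k) * A $ k $ i * s + cnj (?v $ k) * A $ k $ j * t" for k
    by (subst sum_UNIV_two_points[OF assms]) (use assms in auto)
  then have "qform A ?v = (\<Sum>k\<in>UNIV. cnj (?v $ k) * A $ k $ i * s + cnj (?v $ k) * A $ k $ j * t)"
    unfolding qform_def by simp
  also have "\<dots> = cnj s * A $ i $ i * s + cnj s * A $ i $ j * t + (cnj t * A $ j $ i * s + cnj t * A $ j $ j * t)"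
    by (subst sum_UNIV_two_points[OF assms]) (use assms in auto)
  finally show ?thesis by (simp add: add.assoc)
qed

lemma qform_unit_vector: "qform A (\<chi> k. if k = i then 1 else 0) = A $ i $ i"
proof -
  have "(\<Sum>l\<in>UNIV. cnj ((\<chi> k. if k = i then 1 else 0) $ k) * A $ k $ l * (\<chi> k. if k = i then 1 else 0) $ l)
      = (if k = i then A $ k $ i else 0)" for k
    by (simp add: if_distrib[of "\<lambda>x. _ * x"] sum.delta cong: if_cong)
  then show ?thesis unfolding qform_def by (simp add: sum.delta)
qed

lemma psd_hermitian: "psd A \<Longrightarrow> A $ j $ i = cnj (A $ i $ j)"
  unfolding psd_def adjointm_def by (metis vec_lambda_beta)

lemma psd_diag:
  assumes "psd A"
  shows psd_diag_real: "A $ i $ i = of_real (Re (A $ i $ i))"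
    and psd_diag_nonneg: "0 \<le> Re (A $ i $ i)"
proof -
  have "A $ i $ i \<in> \<real>" "0 \<le> Re (A $ i $ i)"
    using assms qform_unit_vector[of A i] unfolding psd_def by metis+
  then show "A $ i $ i = of_real (Re (A $ i $ i))" "0 \<le> Re (A $ i $ i)"
    by (auto simp: complex_is_Real_iff complex_eq_iff)
qed

lemma psd_offdiag_norm_le:
  assumes A: "psd A" and "i \<noteq> j"
  shows "(cmod (A $ i $ j))\<^sup>2 \<le> Re (A $ i $ i) * Re (A $ j $ j)"
proof (rule nonneg_quadratic_coeff_bound)
  let ?c = "A $ i $ j"
  fix \<tau> :: real
  have "cnj 1 * A $ i $ i * 1 + cnj 1 * ?c * (- \<tau> * cnj ?c) + cnj (- \<tau> * cnj ?c) * A $ j $ i * 1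
      + cnj (- \<tau> * cnj ?c) * A $ j $ j * (- \<tau> * cnj ?c)
      = A $ i $ i - 2 * \<tau> * (?c * cnj ?c) + \<tau>\<^sup>2 * (?c * cnj ?c) * A $ j $ j"
    unfolding psd_hermitian[OF A, of i j] by (simp add: power2_eq_square algebra_simps)
  also have "\<dots> = of_real (Re (A $ i $ i) - 2 * \<tau> * (cmod ?c)\<^sup>2 + \<tau>\<^sup>2 * (cmod ?c)\<^sup>2 * Re (A $ j $ j))"
    unfolding complex_norm_square[symmetric] by (subst (1 2) psd_diag_real[OF A]) simp
  finally have expand: "qform A (\<chi> k. if k = i then 1 else if k = j then - \<tau> * cnj ?c else 0)
      = of_real (Re (A $ i $ i) - 2 * \<tau> * (cmod ?c)\<^sup>2 + \<tau>\<^sup>2 * (cmod ?c)\<^sup>2 * Re (A $ j $ j))"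
    unfolding qform_two_point_vector[OF \<open>i \<noteq> j\<close>] .
  have "0 \<le> Re (qform A (\<chi> k. if k = i then 1 else if k = j then - \<tau> * cnj ?c else 0))"
    using A unfolding psd_def by blast
  then show "0 \<le> Re (A $ i $ i) - 2 * (cmod ?c)\<^sup>2 * \<tau> + Re (A $ j $ j) * (cmod ?c)\<^sup>2 * \<tau>\<^sup>2"
    unfolding expand Re_complex_of_real by (simp add: mult_ac)
qed (use psd_diag_nonneg[OF A] in auto)

definition pure_mixture :: "complex^'n \<Rightarrow> complex^'n \<Rightarrow> complex^'n^'n" where
  "pure_mixture w1 w2 = (\<chi> i j. (w1 $ i * cnj (w1 $ j) + w2 $ i * cnj (w2 $ j)) / 2)"

lemma qform_rank_one:
  fixes w v :: "complex^'n"
  shows "(\<Sum>i\<in>UNIV. \<Sum>j\<in>UNIV. cnj (v $ i) * (w $ i * cnj (w $ j)) * v $ j)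
     = of_real ((cmod (\<Sum>i\<in>UNIV. cnj (v $ i) * w $ i))\<^sup>2)"
proof -
  have "(\<Sum>i\<in>UNIV. \<Sum>j\<in>UNIV. cnj (v $ i) * (w $ i * cnj (w $ j)) * v $ j)
      = (\<Sum>i\<in>UNIV. cnj (v $ i) * w $ i) * cnj (\<Sum>j\<in>UNIV. cnj (v $ j) * w $ j)"
    unfolding sum_product cnj_sum by (intro sum.cong refl) (simp add: mult_ac)
  then show ?thesis by (simp only: complex_norm_square)
qed

lemma psd_pure_mixture: "psd (pure_mixture w1 w2)"
  unfolding psd_def
proof (intro conjI allI)
  show "pure_mixture w1 w2 = adjointm (pure_mixture w1 w2)"
    unfolding pure_mixture_def adjointm_def by (simp add: vec_eq_iff mult.commute)
  fix v
  have "qform (pure_mixture w1 w2) v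
      = ((\<Sum>i\<in>UNIV. \<Sum>j\<in>UNIV. cnj (v $ i) * (w1 $ i * cnj (w1 $ j)) * v $ j)
        + (\<Sum>i\<in>UNIV. \<Sum>j\<in>UNIV. cnj (v $ i) * (w2 $ i * cnj (w2 $ j)) * v $ j)) / 2"
    unfolding qform_def pure_mixture_def
    by (simp add: sum.distrib[symmetric] sum_divide_distrib ring_distribs)
  also have "\<dots> = of_real (((cmod (\<Sum>i\<in>UNIV. cnj (v $ i) * w1 $ i))\<^sup>2
      + (cmod (\<Sum>i\<in>UNIV. cnj (v $ i) * w2 $ i))\<^sup>2) / 2)"
    unfolding qform_rank_one by simp
  finally have sum_of_squares: "qform (pure_mixture w1 w2) v = of_real (((cmod (\<Sum>i\<in>UNIV. cnj (v $ i) * w1 $ i))\<^sup>2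
      + (cmod (\<Sum>i\<in>UNIV. cnj (v $ i) * w2 $ i))\<^sup>2) / 2)" .
  show "qform (pure_mixture w1 w2) v \<in> \<real>"
    unfolding sum_of_squares by (rule Reals_of_real)
  show "0 \<le> Re (qform (pure_mixture w1 w2) v)"
    unfolding sum_of_squares Re_complex_of_real by simp
qed

lemma sum_UNIV_2x2: "sum f (UNIV :: (2 \<times> 2) set) = f (1,1) + f (1,2) + f (2,1) + f (2,2)"
proof -
  have "sum f (UNIV :: (2 \<times> 2) set) = (\<Sum>i\<in>UNIV. \<Sum>j\<in>UNIV. f (i, j))"
    by (simp add: sum.cartesian_product UNIV_Times_UNIV[symmetric] del: UNIV_Times_UNIV)
  then show ?thesis by (simp add: sum_2 add.assoc)
qed

lemma ptrace_dual_qubit_entry: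
  fixes P :: "complex^('a::finite \<times> 2)^('a \<times> 2)"
  shows "ptrace_dual P $ i $ k = P $ (i,1) $ (k,1) + P $ (i,2) $ (k,2)"
  unfolding ptrace_dual_def by (simp add: sum_2)

lemma ptrace_H_qubit_entry:
  fixes P :: "complex^(2 \<times> 'b::finite)^(2 \<times> 'b)"
  shows "ptrace_H P $ j $ l = P $ (1,j) $ (1,l) + P $ (2,j) $ (2,l)"
  unfolding ptrace_H_def by (simp add: sum_2)

lemma C_z2_entry: "C_z2 $ p $ q = (if p = q \<and> fst p \<noteq> snd p then 4 else 0)"
proof -
  define X where "X = kron sigma_z (transpose (mat 1)) - kron (mat 1) (transpose sigma_z)"
  define d where "d = (\<lambda>i::2. if i = 1 then (1::complex) else -1)"
  have X: "X $ p $ q = (if p = q then d (fst p) - d (snd p) else 0)" for p q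
    unfolding X_def kron_def sigma_z_def mat_def d_def
    by (cases p; cases q; auto simp: transpose_def)
  have "(X ** X) $ p $ q = (\<Sum>k\<in>UNIV. if k = p \<and> p = q then (d (fst p) - d (snd p))\<^sup>2 else 0)"
    by (simp add: matrix_matrix_mult_def X) (intro sum.cong; auto simp: power2_eq_square)
  also have "\<dots> = (if p = q then (d (fst p) - d (snd p))\<^sup>2 else 0)"
    by simp
  also have "\<dots> = (if p = q \<and> fst p \<noteq> snd p then 4 else 0)"
    using exhaust_2[of "fst p"] exhaust_2[of "snd p"] by (auto simp: d_def)
  finally show ?thesis unfolding C_z2_def Let_def X_def .
qed

lemma trace_mult_C_z2: "mtrace (P ** C_z2) = 4 * (P $ (1,2) $ (1,2) + P $ (2,1) $ (2,1))"
proof -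
  have "(P ** C_z2) $ p $ p = (\<Sum>k\<in>UNIV. if k = p then (if fst p \<noteq> snd p then 4 * P $ p $ p else 0) else 0)" for p
    unfolding matrix_matrix_mult_def C_z2_entry vec_lambda_beta by (intro sum.cong) auto
  then show ?thesis unfolding mtrace_def sum_UNIV_2x2 by simp
qed

definition balanced_qubit :: "complex \<Rightarrow> complex^2^2" where
  "balanced_qubit a = (\<chi> i j. if i = j then 1/2 else if i = 1 then a else cnj a)"

lemma balanced_qubit_entries [simp]:
  "balanced_qubit a $ 1 $ 1 = 1/2" "balanced_qubit a $ 2 $ 2 = 1/2"
  "balanced_qubit a $ 1 $ 2 = a" "balanced_qubit a $ 2 $ 1 = cnj a"
  unfolding balanced_qubit_def by simp_all

lemma state_orth_sigma_z_balanced: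
  assumes state: "is_state \<rho>" and orth: "mtrace (\<rho> ** sigma_z) = 0"
  shows "\<rho> = balanced_qubit (\<rho> $ 1 $ 2)" "cmod (\<rho> $ 1 $ 2) \<le> 1/2"
proof -
  have psd: "psd \<rho>" using state unfolding is_state_def by simp
  have "\<rho> $ 1 $ 1 + \<rho> $ 2 $ 2 = 1" using state unfolding is_state_def mtrace_def by (simp add: sum_2)
  moreover have "\<rho> $ 1 $ 1 - \<rho> $ 2 $ 2 = 0"
    using orth unfolding mtrace_def matrix_matrix_mult_def sigma_z_def by (simp add: sum_2)
  ultimately have diag: "\<rho> $ 1 $ 1 = 1/2" "\<rho> $ 2 $ 2 = 1/2" by (simp_all add: complex_eq_iff)
  then show "\<rho> = balanced_qubit (\<rho> $ 1 $ 2)"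
    unfolding balanced_qubit_def using psd_hermitian[OF psd, of 1 2]
    by (simp add: vec_eq_iff forall_2)
  have "(cmod (\<rho> $ 1 $ 2))\<^sup>2 \<le> Re (\<rho> $ 1 $ 1) * Re (\<rho> $ 2 $ 2)"
    by (rule psd_offdiag_norm_le[OF psd]) simp
  also have "\<dots> = (1/2)\<^sup>2" by (simp add: diag power2_eq_square)
  finally show "cmod (\<rho> $ 1 $ 2) \<le> 1/2" by (rule power2_le_imp_le) simp
qed

definition optimal_z_cost :: "real \<Rightarrow> real" where
  "optimal_z_cost t = 2 - 2 * sqrt (1 - 4 * t\<^sup>2)"

lemma mono_on_optimal_z_cost: "mono_on {0..} optimal_z_cost"
  unfolding optimal_z_cost_def by (rule mono_onI) (simp add: power_mono)

lemma optimal_z_cost_le: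
  fixes m x y :: real
  assumes "m\<^sup>2 \<le> 4 * x * y" "x + y = 1/2"
  shows "optimal_z_cost m \<le> 8 * y"
proof -
  have "(1 - 4 * y)\<^sup>2 = 1 - 16 * x * y"
    using arg_cong[OF assms(2), of "\<lambda>s. 16 * y * s"] by (simp add: power2_eq_square algebra_simps)
  then have "(1 - 4 * y)\<^sup>2 \<le> 1 - 4 * m\<^sup>2" using assms(1) by linarith
  then have "1 - 4 * y \<le> sqrt (1 - 4 * m\<^sup>2)" by (rule real_le_rsqrt)
  then show ?thesis unfolding optimal_z_cost_def by simp
qed

lemma norm_add_square_le:
  fixes z w :: "'a::real_normed_vector"
  assumes "(norm z)\<^sup>2 \<le> p" "(norm w)\<^sup>2 \<le> p"
  shows "(norm (z + w))\<^sup>2 \<le> 4 * p"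
proof -
  have "(norm (z + w))\<^sup>2 \<le> (norm z + norm w)\<^sup>2"
    by (simp add: norm_triangle_ineq power_mono)
  also have "\<dots> \<le> 2 * (norm z)\<^sup>2 + 2 * (norm w)\<^sup>2"
    using zero_le_power2[of "norm z - norm w"] unfolding power2_sum power2_diff by linarith
  finally show ?thesis using assms by linarith
qed

lemma coupling_cost_lower_bound:
  assumes "P \<in> couplings (balanced_qubit a) (balanced_qubit b)"
  shows "optimal_z_cost (max (cmod a) (cmod b)) \<le> Re (mtrace (P ** C_z2))"
proof -
  have psd: "psd P" and dual: "ptrace_dual P = balanced_qubit b"
    and H: "ptrace_H P = transpose (balanced_qubit a)"
    using assms unfolding couplings_def is_state_def by auto
  define x where "x = Re (P $ (1,1) $ (1,1))"
  define y where "y = Re (P $ (1,2) $ (1,2))"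
  have "Re (ptrace_dual P $ 1 $ 1) = 1/2" "Re (ptrace_dual P $ 2 $ 2) = 1/2"
    "Re (ptrace_H P $ 1 $ 1) = 1/2"
    unfolding dual H by (simp_all add: transpose_def)
  then have x_plus_y: "x + y = 1/2" and diag: "Re (P $ (2,1) $ (2,1)) = y" "Re (P $ (2,2) $ (2,2)) = x"
    unfolding ptrace_dual_qubit_entry ptrace_H_qubit_entry x_def y_def by simp_all
  have offdiag: "(cmod (P $ p $ q))\<^sup>2 \<le> x * y"
    if "Re (P $ p $ p) * Re (P $ q $ q) = x * y" "p \<noteq> q" for p q
    using psd_offdiag_norm_le[OF psd \<open>p \<noteq> q\<close>] that(1) by simp
  have b_eq: "b = P $ (1,1) $ (2,1) + P $ (1,2) $ (2,2)"
    using arg_cong[OF dual, of "\<lambda>M. M $ 1 $ 2"] unfolding ptrace_dual_qubit_entry by simp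
  have b: "(cmod b)\<^sup>2 \<le> 4 * (x * y)"
    unfolding b_eq by (rule norm_add_square_le; rule offdiag; simp add: x_def y_def diag mult.commute)
  have a_eq: "a = P $ (1,2) $ (1,1) + P $ (2,2) $ (2,1)"
    using arg_cong[OF H, of "\<lambda>M. M $ 2 $ 1"] unfolding ptrace_H_qubit_entry by (simp add: transpose_def)
  have a: "(cmod a)\<^sup>2 \<le> 4 * (x * y)"
    unfolding a_eq by (rule norm_add_square_le; rule offdiag; simp add: x_def y_def diag mult.commute)
  have "(max (cmod a) (cmod b))\<^sup>2 \<le> 4 * x * y"
    using a b by (simp add: max_def)
  then have "optimal_z_cost (max (cmod a) (cmod b)) \<le> 8 * y"
    using x_plus_y by (rule optimal_z_cost_le)
  also have "8 * y = Re (mtrace (P ** C_z2))"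
    unfolding trace_mult_C_z2 using diag(1) by (simp add: y_def)
  finally show ?thesis .
qed

lemma unit_complex_midpoint:
  fixes c :: complex
  assumes "cmod c \<le> 1"
  obtains u1 u2 where "cmod u1 = 1" "cmod u2 = 1" "u1 + u2 = 2 * c"
proof
  define \<phi> where "\<phi> = arccos (cmod c)"
  have "cis (Arg c + \<phi>) + cis (Arg c - \<phi>) = cis (Arg c) * (cis \<phi> + cis (- \<phi>))"
    by (simp add: distrib_left cis_mult)
  also have "cis \<phi> + cis (- \<phi>) = of_real (2 * cmod c)"
    using assms order_trans[of "-1" 0 "cmod c"] by (simp add: complex_eq_iff \<phi>_def)
  also have "cis (Arg c) * of_real (2 * cmod c) = 2 * c"
    using rcis_cmod_Arg[of c] by (simp add: rcis_def mult.commute)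
  finally show "cis (Arg c + \<phi>) + cis (Arg c - \<phi>) = 2 * c" .
qed simp_all

text \<open>For unimodular phases, an even mixture of two phase vectors has diagonal \<open>(x, y, y, x)\<close>
  whatever the phases; only the off-diagonal entries seen by the marginals depend on them.\<close>

definition phase_vector :: "real \<Rightarrow> real \<Rightarrow> complex \<Rightarrow> complex \<Rightarrow> complex^(2\<times>2)" where
  "phase_vector x y u v = (\<chi> e. if e = (1,1) then of_real (sqrt x) else if e = (1,2) then of_real (sqrt y) * u
     else if e = (2,1) then of_real (sqrt y) * v else of_real (sqrt x) * u * v)"

lemma phase_mixture_entries:
  fixes x y :: real and u1 u2 v1 v2 :: complex
  defines "P \<equiv> pure_mixture (phase_vector x y u1 v1) (phase_vector x y u2 v2)"
  assumes "0 \<le> x" "0 \<le> y" "cmod u1 = 1" "cmod u2 = 1" "cmod v1 = 1" "cmod v2 = 1"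
  shows "P $ (1,1) $ (1,1) = x" "P $ (1,2) $ (1,2) = y" "P $ (2,1) $ (2,1) = y" "P $ (2,2) $ (2,2) = x"
    "P $ (1,1) $ (2,1) + P $ (1,2) $ (2,2) = of_real (sqrt (x * y)) * cnj (v1 + v2)"
    "P $ (1,1) $ (1,2) + P $ (2,1) $ (2,2) = of_real (sqrt (x * y)) * cnj (u1 + u2)"
proof -
  have unit: "u1 * cnj u1 = 1" "u2 * cnj u2 = 1" "v1 * cnj v1 = 1" "v2 * cnj v2 = 1"
    using assms(4-7) complex_norm_square by (metis of_real_1 power_one)+
  have sq: "of_real (sqrt x) * of_real (sqrt x) = complex_of_real x"
    "of_real (sqrt y) * of_real (sqrt y) = complex_of_real y"
    "complex_of_real (sqrt (x * y)) = of_real (sqrt x) * of_real (sqrt y)"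
    using assms(2,3) by (simp_all flip: of_real_mult add: real_sqrt_mult)
  show "P $ (1,1) $ (1,1) = x" "P $ (1,2) $ (1,2) = y" "P $ (2,1) $ (2,1) = y" "P $ (2,2) $ (2,2) = x"
    "P $ (1,1) $ (2,1) + P $ (1,2) $ (2,2) = of_real (sqrt (x * y)) * cnj (v1 + v2)"
    "P $ (1,1) $ (1,2) + P $ (2,1) $ (2,2) = of_real (sqrt (x * y)) * cnj (u1 + u2)"
    unfolding P_def pure_mixture_def phase_vector_def sq(3) using unit sq(1,2)
    by (simp_all; algebra)+
qed

lemma phase_mixture_coupling:
  fixes x y :: real and u1 u2 v1 v2 :: complex
  defines "P \<equiv> pure_mixture (phase_vector x y u1 v1) (phase_vector x y u2 v2)"
  assumes "0 \<le> x" "0 \<le> y" "x + y = 1/2"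
    and "cmod u1 = 1" "cmod u2 = 1" "cmod v1 = 1" "cmod v2 = 1"
  shows "P \<in> couplings (balanced_qubit (of_real (sqrt (x * y)) * (u1 + u2)))
                       (balanced_qubit (of_real (sqrt (x * y)) * cnj (v1 + v2)))"
    and "Re (mtrace (P ** C_z2)) = 8 * y"
proof -
  note entries = phase_mixture_entries[OF assms(2,3,5-8), folded P_def]
  have psd: "psd P" unfolding P_def by (rule psd_pure_mixture)
  have half: "complex_of_real x + of_real y = 1/2"
    using arg_cong[OF assms(4), of complex_of_real] by simp
  have "cnj (P $ (1,1) $ (2,1) + P $ (1,2) $ (2,2)) = P $ (2,1) $ (1,1) + P $ (2,2) $ (1,2)"
    "cnj (P $ (1,1) $ (1,2) + P $ (2,1) $ (2,2)) = P $ (1,2) $ (1,1) + P $ (2,2) $ (2,1)"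
    using psd_hermitian[OF psd, of "(1,1)" "(2,1)"] psd_hermitian[OF psd, of "(1,2)" "(2,2)"]
      psd_hermitian[OF psd, of "(1,1)" "(1,2)"] psd_hermitian[OF psd, of "(2,1)" "(2,2)"]
    by simp_all
  then have adjoint_entries:
    "P $ (2,1) $ (1,1) + P $ (2,2) $ (1,2) = of_real (sqrt (x * y)) * (v1 + v2)"
    "P $ (1,2) $ (1,1) + P $ (2,2) $ (2,1) = of_real (sqrt (x * y)) * (u1 + u2)"
    unfolding entries by simp_all
  have "mtrace P = 1"
    unfolding mtrace_def sum_UNIV_2x2 entries using half by (simp add: algebra_simps)
  moreover have "ptrace_dual P = balanced_qubit (of_real (sqrt (x * y)) * cnj (v1 + v2))"
    unfolding vec_eq_iff forall_2 ptrace_dual_qubit_entry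
    using entries adjoint_entries half by (simp add: add.commute)
  moreover have "ptrace_H P = transpose (balanced_qubit (of_real (sqrt (x * y)) * (u1 + u2)))"
    unfolding vec_eq_iff forall_2 ptrace_H_qubit_entry
    using entries adjoint_entries half by (simp add: transpose_def add.commute)
  ultimately show "P \<in> couplings (balanced_qubit (of_real (sqrt (x * y)) * (u1 + u2)))
                       (balanced_qubit (of_real (sqrt (x * y)) * cnj (v1 + v2)))"
    unfolding couplings_def is_state_def using psd by blast
  show "Re (mtrace (P ** C_z2)) = 8 * y"
    unfolding trace_mult_C_z2 entries by simp
qed

lemma optimal_coupling_exists:
  assumes "cmod a \<le> 1/2" "cmod b \<le> 1/2"
  shows "\<exists>P \<in> couplings (balanced_qubit a) (balanced_qubit b).
           Re (mtrace (P ** C_z2)) = optimal_z_cost (max (cmod a) (cmod b))"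
proof -
  define m where "m = max (cmod a) (cmod b)"
  define r where "r = sqrt (1 - 4 * m\<^sup>2)"
  define x where "x = (1 + r) / 4"
  define y where "y = (1 - r) / 4"
  have "0 \<le> m" "m \<le> 1/2" using assms unfolding m_def by (auto simp: le_max_iff_disj)
  then have "m\<^sup>2 \<le> (1/2)\<^sup>2" by (simp add: power_mono)
  then have r: "0 \<le> r" "r \<le> 1" "r\<^sup>2 = 1 - 4 * m\<^sup>2" unfolding r_def by (simp_all add: power2_eq_square)
  have xy: "0 \<le> x" "0 \<le> y" "x + y = 1/2"
    using r(1,2) unfolding x_def y_def by (simp_all add: field_simps)
  have "x * y = (m / 2)\<^sup>2"
    using r(3) unfolding x_def y_def by (simp add: power2_eq_square field_simps)
  then have sqrt_xy: "sqrt (x * y) = m / 2"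
    using \<open>0 \<le> m\<close> by simp
  have "cmod (a / of_real m) \<le> 1" "cmod (cnj (b / of_real m)) \<le> 1"
    using \<open>0 \<le> m\<close> unfolding m_def by (auto simp: norm_divide divide_le_eq_1)
  then obtain u1 u2 v1 v2 where u: "cmod u1 = 1" "cmod u2 = 1" "u1 + u2 = 2 * (a / of_real m)"
    and v: "cmod v1 = 1" "cmod v2 = 1" "v1 + v2 = 2 * cnj (b / of_real m)"
    by (metis unit_complex_midpoint)
  \<comment> \<open>for m = 0 both a and b vanish, so the junk value a / 0 = 0 does no harm\<close>
  have "of_real (sqrt (x * y)) * (u1 + u2) = a" "of_real (sqrt (x * y)) * cnj (v1 + v2) = b"
    unfolding sqrt_xy u(3) v(3) using m_def by (auto simp: max_def split: if_splits)
  note coupling = phase_mixture_coupling[OF xy u(1,2) v(1,2), unfolded this]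
  have "8 * y = optimal_z_cost m"
    unfolding optimal_z_cost_def y_def r_def by simp
  with coupling show ?thesis
    unfolding m_def[symmetric] by (intro bexI) simp_all
qed

lemma D2_z2_balanced_qubit:
  assumes "cmod a \<le> 1/2" "cmod b \<le> 1/2"
  shows "D2_z2 (balanced_qubit a) (balanced_qubit b) = optimal_z_cost (max (cmod a) (cmod b))"
  unfolding D2_z2_def
proof (rule cInf_eq_minimum)
  show "optimal_z_cost (max (cmod a) (cmod b))
      \<in> (\<lambda>P. Re (mtrace (P ** C_z2))) ` couplings (balanced_qubit a) (balanced_qubit b)"
    using optimal_coupling_exists[OF assms] by force
qed (auto intro: coupling_cost_lower_bound)

lemma mono_on_max_triangle:
  fixes f :: "real \<Rightarrow> 'b::ordered_ab_semigroup_add"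
  assumes f: "mono_on {0..} f" and "0 \<le> a" "0 \<le> s" "0 \<le> w"
  shows "f s + f (max a w) \<le> f (max a s) + f (max s w)"
proof (cases "w \<le> a")
  case True
  then have "f s \<le> f (max s w)" "f (max a w) \<le> f (max a s)"
    using assms by (auto intro!: mono_onD[OF f])
  then show ?thesis by (metis add_mono add.commute)
next
  case False
  then have "f s \<le> f (max a s)" "f (max a w) \<le> f (max s w)"
    using assms by (auto intro!: mono_onD[OF f])
  then show ?thesis by (rule add_mono)
qed

theorem proposition3p8:
  fixes \<rho> \<sigma> \<omega> :: "complex^2^2"
  assumes "is_state \<rho>" "is_state \<sigma>" "is_state \<omega>"
    and "mtrace (\<rho> ** sigma_z) = 0" "mtrace (\<sigma> ** sigma_z) = 0" "mtrace (\<omega> ** sigma_z) = 0"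
  shows "d2_z2 \<rho> \<sigma> + d2_z2 \<sigma> \<omega> \<ge> d2_z2 \<rho> \<omega>"
proof -
  define a s w where "a = \<rho> $ 1 $ 2" and "s = \<sigma> $ 1 $ 2" and "w = \<omega> $ 1 $ 2"
  note \<rho> = state_orth_sigma_z_balanced[OF assms(1,4), folded a_def]
    and \<sigma> = state_orth_sigma_z_balanced[OF assms(2,5), folded s_def]
    and \<omega> = state_orth_sigma_z_balanced[OF assms(3,6), folded w_def]
  have "optimal_z_cost (cmod s) + optimal_z_cost (max (cmod a) (cmod w))
      \<le> optimal_z_cost (max (cmod a) (cmod s)) + optimal_z_cost (max (cmod s) (cmod w))"
    by (rule mono_on_max_triangle[OF mono_on_optimal_z_cost]) simp_all
  then show ?thesis
    unfolding d2_z2_def \<rho>(1) \<sigma>(1) \<omega>(1)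
    using \<rho>(2) \<sigma>(2) \<omega>(2) by (simp add: D2_z2_balanced_qubit field_simps)
qed

end
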